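(* Let $\Lambda$ be a set and $\mathscr{G}=\hat\Lambda$ its groupoid of pairs. The following data on $\Lambda$ are equivalent (in bijective correspondence): (i) a group operation $*$ on $\Lambda$; (ii) a pointed heap structure on $\Lambda$, i.e. a heap structure together with a distinguished element $u\in\Lambda$; (iii) a pre-braiding $\sigma$ on $\mathscr{G}$ together with a distinguished vertex $u\in\Lambda$. The correspondences are: a group $(\Lambda,* )$ with unit $u$ gives the heap $\langle a,b,c\rangle=a*b^{-1}*c$ pointed at $u$; a pointed heap gives the group $a*b=\langle a,u,b\rangle$; a heap corresponds to the pre-braiding $\sigma([a,b]|[b,c])=[a,\langle a,b,c\rangle]|[\langle a,b,c\rangle,c]$. Under this correspondence, abelian groups correspond to involutive braidings, and thus to ternary operations satisfying $\langle a,\langle a,b,c\rangle,c\rangle=b$ for all $a,b,c$.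
   Context: The groupoid of pairs $\hat\Lambda$ has vertex set $\Lambda$ and one arrow $[a,b]\colon a\to b$ for each $(a,b)$, with $[a,b][b,c]=[a,c]$ and units $[a,a]$. For a groupoid $\mathscr{G}$ with multiplication $m$ and units $\mathbf{1}_\lambda$, a pre-braiding is a source/target-preserving map $\sigma\colon\mathscr{G}\otimes\mathscr{G}\to\mathscr{G}\otimes\mathscr{G}$ on composable pairs, $\sigma(x,y)=(x\rightharpoonup y,x\leftharpoonup y)$, such that for all composable $x|y|z$: $\sigma(x,\mathbf{1}_{\mathfrak{t}(x)})=(\mathbf{1}_{\mathfrak{s}(x)},x)$; $\sigma(\mathbf{1}_{\mathfrak{s}(x)},x)=(x,\mathbf{1}_{\mathfrak{t}(x)})$; $x\rightharpoonup yz=(x\rightharpoonup y)((x\leftharpoonup y)\rightharpoonup z)$, $x\leftharpoonup yz=(x\leftharpoonup y)\leftharpoonup z$; $xy\leftharpoonup z=(x\leftharpoonup(y\rightharpoonup z))(y\leftharpoonup z)$, $xy\rightharpoonup z=x\rightharpoonup(y\rightharpoonup z)$; and $m\circ\sigma=m$. A braiding is a bijective pre-braiding; involutive means $\sigma^2=\mathrm{id}$. A heap is a set with a ternary operation satisfying $\langle a,b,b\rangle=a$, $\langle a,a,b\rangle=b$, $\langle a,b,\langle c,d,e\rangle\rangle=\langle\langle a,b,c\rangle,d,e\rangle$. *)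

theory Defs
  imports "HOL-Algebra.Group"
begin

text \<open>Arrows of the groupoid of pairs on the vertex set (the type 'a) are pairs (a,b),
  standing for the arrow [a,b] from a to b. Composition is written diagrammatically:
  [a,b][b,c] = [a,c].\<close>

type_synonym 'a arr = "'a \<times> 'a"

definition pg_src :: "'a arr \<Rightarrow> 'a" where "pg_src x = fst x"
definition pg_tgt :: "'a arr \<Rightarrow> 'a" where "pg_tgt x = snd x"
definition pg_unit :: "'a \<Rightarrow> 'a arr" where "pg_unit a = (a, a)"
definition pg_composable :: "'a arr \<Rightarrow> 'a arr \<Rightarrow> bool" where
  "pg_composable x y \<longleftrightarrow> pg_tgt x = pg_src y"
definition pg_comp :: "'a arr \<Rightarrow> 'a arr \<Rightarrow> 'a arr" where
  "pg_comp x y = (pg_src x, pg_tgt y)"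

definition pg_Comp :: "('a arr \<times> 'a arr) set" where
  "pg_Comp = {(x, y). pg_composable x y}"

definition lact :: "('a arr \<times> 'a arr \<Rightarrow> 'a arr \<times> 'a arr) \<Rightarrow> 'a arr \<Rightarrow> 'a arr \<Rightarrow> 'a arr" where
  "lact \<sigma> x y = fst (\<sigma> (x, y))"
definition ract :: "('a arr \<times> 'a arr \<Rightarrow> 'a arr \<times> 'a arr) \<Rightarrow> 'a arr \<Rightarrow> 'a arr \<Rightarrow> 'a arr" where
  "ract \<sigma> x y = snd (\<sigma> (x, y))"

text \<open>Pre-braiding on the groupoid of pairs. A map defined only on composable pairs is
  represented extensionally: it takes the value undefined outside composable pairs.\<close>
definition pre_braiding :: "('a arr \<times> 'a arr \<Rightarrow> 'a arr \<times> 'a arr) \<Rightarrow> bool" where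
  "pre_braiding \<sigma> \<longleftrightarrow>
     (\<forall>p. p \<notin> pg_Comp \<longrightarrow> \<sigma> p = undefined) \<and>
     (\<forall>x y. pg_composable x y \<longrightarrow>
        \<sigma> (x, y) \<in> pg_Comp \<and> pg_src (lact \<sigma> x y) = pg_src x \<and> pg_tgt (ract \<sigma> x y) = pg_tgt y) \<and>
     (\<forall>x. \<sigma> (x, pg_unit (pg_tgt x)) = (pg_unit (pg_src x), x)) \<and>
     (\<forall>x. \<sigma> (pg_unit (pg_src x), x) = (x, pg_unit (pg_tgt x))) \<and>
     (\<forall>x y z. pg_composable x y \<and> pg_composable y z \<longrightarrow>
        lact \<sigma> x (pg_comp y z) = pg_comp (lact \<sigma> x y) (lact \<sigma> (ract \<sigma> x y) z) \<and>
        ract \<sigma> x (pg_comp y z) = ract \<sigma> (ract \<sigma> x y) z \<and>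
        ract \<sigma> (pg_comp x y) z = pg_comp (ract \<sigma> x (lact \<sigma> y z)) (ract \<sigma> y z) \<and>
        lact \<sigma> (pg_comp x y) z = lact \<sigma> x (lact \<sigma> y z)) \<and>
     (\<forall>x y. pg_composable x y \<longrightarrow> case_prod pg_comp (\<sigma> (x, y)) = pg_comp x y)"

definition braiding :: "('a arr \<times> 'a arr \<Rightarrow> 'a arr \<times> 'a arr) \<Rightarrow> bool" where
  "braiding \<sigma> \<longleftrightarrow> pre_braiding \<sigma> \<and> bij_betw \<sigma> pg_Comp pg_Comp"

definition involutive_braiding :: "('a arr \<times> 'a arr \<Rightarrow> 'a arr \<times> 'a arr) \<Rightarrow> bool" where
  "involutive_braiding \<sigma> \<longleftrightarrow> braiding \<sigma> \<and> (\<forall>p \<in> pg_Comp. \<sigma> (\<sigma> p) = p)"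

definition prebraidings :: "('a arr \<times> 'a arr \<Rightarrow> 'a arr \<times> 'a arr) set" where
  "prebraidings = {\<sigma>. pre_braiding \<sigma>}"

definition is_heap :: "('a \<Rightarrow> 'a \<Rightarrow> 'a \<Rightarrow> 'a) \<Rightarrow> bool" where
  "is_heap h \<longleftrightarrow> (\<forall>a b. h a b b = a) \<and> (\<forall>a b. h a a b = b) \<and>
     (\<forall>a b c d e. h a b (h c d e) = h (h a b c) d e)"

definition heaps :: "('a \<Rightarrow> 'a \<Rightarrow> 'a \<Rightarrow> 'a) set" where
  "heaps = {h. is_heap h}"

definition pointed_heaps :: "(('a \<Rightarrow> 'a \<Rightarrow> 'a \<Rightarrow> 'a) \<times> 'a) set" where
  "pointed_heaps = heaps \<times> UNIV"

definition groups_on_type :: "'a monoid set" where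
  "groups_on_type = {G. group G \<and> carrier G = UNIV}"

definition group_heap :: "'a monoid \<Rightarrow> 'a \<Rightarrow> 'a \<Rightarrow> 'a \<Rightarrow> 'a" where
  "group_heap G a b c = (a \<otimes>\<^bsub>G\<^esub> inv\<^bsub>G\<^esub> b) \<otimes>\<^bsub>G\<^esub> c"

definition heap_group :: "('a \<Rightarrow> 'a \<Rightarrow> 'a \<Rightarrow> 'a) \<Rightarrow> 'a \<Rightarrow> 'a monoid" where
  "heap_group h u = \<lparr>carrier = UNIV, mult = (\<lambda>a b. h a u b), one = u\<rparr>"

definition heap_pb :: "('a \<Rightarrow> 'a \<Rightarrow> 'a \<Rightarrow> 'a) \<Rightarrow> ('a arr \<times> 'a arr \<Rightarrow> 'a arr \<times> 'a arr)" where
  "heap_pb h = (\<lambda>(x, y). if pg_composable x y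
      then ((fst x, h (fst x) (snd x) (snd y)), (h (fst x) (snd x) (snd y), snd y))
      else undefined)"

definition pb_heap :: "('a arr \<times> 'a arr \<Rightarrow> 'a arr \<times> 'a arr) \<Rightarrow> 'a \<Rightarrow> 'a \<Rightarrow> 'a \<Rightarrow> 'a" where
  "pb_heap \<sigma> a b c = snd (fst (\<sigma> ((a, b), (b, c))))"

end

theory Submission
  imports Defs
begin

text \<open>A pre-braiding \<sigma> on the groupoid of pairs is forced by the axioms on sources and targets to
  have the form \<sigma>([a,b]|[b,c]) = [a,m]|[m,c], so it is the same thing as the ternary operation
  m = \<langle>a,b,c\<rangle>. The two unit axioms of \<sigma> are the unit laws \<langle>a,b,b\<rangle> = a and \<langle>a,a,b\<rangle> = b.
  Read on [a,b]|[b,c]|[c,d], the compatibility of \<rightharpoonup> with composition in the second argument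
  gives \<langle>a,b,d\<rangle> = \<langle>\<langle>a,b,c\<rangle>,c,d\<rangle>, and that of \<leftharpoonup> with composition in the first argument gives
  \<langle>a,c,d\<rangle> = \<langle>a,b,\<langle>b,c,d\<rangle>\<rangle>; together they are the heap associativity law, and conversely every
  heap satisfies both. Involutivity of \<sigma> reads \<langle>a,\<langle>a,b,c\<rangle>,c\<rangle> = b, which for the heap
  a b\<inverse> c of a group with unit 1 specialises to c\<inverse> b c = b.\<close>

lemma pg_composable_Pair [simp]: "pg_composable (a, b) (c, d) \<longleftrightarrow> b = c"
  by (simp add: pg_composable_def pg_src_def pg_tgt_def)

lemma pg_comp_Pair [simp]: "pg_comp (a, b) (c, d) = (a, d)"
  by (simp add: pg_comp_def pg_src_def pg_tgt_def)

lemma pg_Comp_iff: "((a, b), (c, d)) \<in> pg_Comp \<longleftrightarrow> b = c"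
  by (simp add: pg_Comp_def)

lemma is_heapD:
  assumes "is_heap h"
  shows heap_right_unit: "h a b b = a"
    and heap_left_unit: "h a a b = b"
    and heap_assoc: "h a b (h c d e) = h (h a b c) d e"
  using assms by (auto simp: is_heap_def)

lemma heap_cancel_middle_left:
  assumes "is_heap h" shows "h (h a b c) c d = h a b d"
  by (simp add: assms heap_left_unit flip: heap_assoc[OF assms])

lemma heap_cancel_middle_right:
  assumes "is_heap h" shows "h a b (h b c d) = h a c d"
  by (simp add: assms heap_assoc heap_right_unit)

lemma is_heapI_middle_laws:
  assumes "\<And>a b. h a b b = a" and "\<And>a b. h a a b = b"
    and "\<And>a b c d. h a b d = h (h a b c) c d"
    and "\<And>a b c d. h a c d = h a b (h b c d)"
  shows "is_heap h"
  unfolding is_heap_def using assms by metis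

lemma group_heap_is_heap:
  assumes "G \<in> groups_on_type" shows "is_heap (group_heap G)"
proof -
  interpret group G using assms by (simp add: groups_on_type_def)
  have "carrier G = UNIV" using assms by (simp add: groups_on_type_def)
  then show ?thesis by (simp add: is_heap_def group_heap_def m_assoc)
qed

lemma heap_group_in_groups_on_type:
  assumes "is_heap h" shows "heap_group h u \<in> groups_on_type"
proof -
  note laws = heap_right_unit[OF assms] heap_left_unit[OF assms] heap_assoc[OF assms, symmetric]
  have "group (heap_group h u)"
  proof (rule groupI)
    fix x
    show "\<exists>y\<in>carrier (heap_group h u). y \<otimes>\<^bsub>heap_group h u\<^esub> x = \<one>\<^bsub>heap_group h u\<^esub>"
      by (rule bexI[where x = "h u x u"]) (simp_all add: heap_group_def laws)
  qed (simp_all add: heap_group_def laws)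
  then show ?thesis by (simp add: groups_on_type_def heap_group_def)
qed

lemma one_heap_group [simp]: "\<one>\<^bsub>heap_group h u\<^esub> = u"
  by (simp add: heap_group_def)

lemma inv_heap_group:
  assumes "is_heap h" shows "inv\<^bsub>heap_group h u\<^esub> b = h u b u"
proof -
  interpret group "heap_group h u"
    using heap_group_in_groups_on_type[OF assms] by (simp add: groups_on_type_def)
  show ?thesis
    by (rule inv_equality)
      (simp_all add: heap_group_def assms heap_right_unit heap_left_unit flip: heap_assoc[OF assms])
qed

lemma group_heap_heap_group:
  assumes "is_heap h" shows "group_heap (heap_group h u) = h"
proof (intro ext)
  fix a b c
  have "group_heap (heap_group h u) a b c = h (h a u (h u b u)) u c"
    by (simp add: group_heap_def inv_heap_group[OF assms]) (simp add: heap_group_def)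
  also have "\<dots> = h (h a b u) u c"
    by (simp add: assms heap_cancel_middle_right)
  also have "\<dots> = h a b c"
    by (simp add: assms heap_cancel_middle_left)
  finally show "group_heap (heap_group h u) a b c = h a b c" .
qed

lemma heap_group_group_heap:
  assumes "G \<in> groups_on_type" shows "heap_group (group_heap G) \<one>\<^bsub>G\<^esub> = G"
proof -
  interpret group G using assms by (simp add: groups_on_type_def)
  have carrier: "carrier G = UNIV" using assms by (simp add: groups_on_type_def)
  have "mult G = (\<lambda>a b. group_heap G a \<one>\<^bsub>G\<^esub> b)"
    by (intro ext) (simp add: group_heap_def carrier)
  then show ?thesis by (simp add: heap_group_def carrier)
qed

lemma bij_betw_group_pointed_heap:
  "bij_betw (\<lambda>G. (group_heap G, \<one>\<^bsub>G\<^esub>)) groups_on_type pointed_heaps"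
  by (rule bij_betw_byWitness[where f' = "\<lambda>(h, u). heap_group h u"])
    (auto simp: pointed_heaps_def heaps_def heap_group_group_heap group_heap_heap_group
      group_heap_is_heap heap_group_in_groups_on_type)

lemma comm_group_iff_group_heap_self_inverse:
  assumes "G \<in> groups_on_type"
  shows "comm_group G \<longleftrightarrow> (\<forall>a b c. group_heap G a (group_heap G a b c) c = b)"
proof -
  interpret group G using assms by (simp add: groups_on_type_def)
  have carrier: "carrier G = UNIV" using assms by (simp add: groups_on_type_def)
  have unfold: "group_heap G a (group_heap G a b c) c = a \<otimes>\<^bsub>G\<^esub> (inv\<^bsub>G\<^esub> c \<otimes>\<^bsub>G\<^esub> (b \<otimes>\<^bsub>G\<^esub> (inv\<^bsub>G\<^esub> a \<otimes>\<^bsub>G\<^esub> c)))"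
    for a b c by (simp add: group_heap_def carrier inv_mult_group m_assoc)
  show ?thesis
  proof
    assume "comm_group G"
    then interpret comm_group G .
    show "\<forall>a b c. group_heap G a (group_heap G a b c) c = b"
      by (metis unfold UNIV_I carrier l_inv m_lcomm r_one)
  next
    assume self_inverse: "\<forall>a b c. group_heap G a (group_heap G a b c) c = b"
    have "x \<otimes>\<^bsub>G\<^esub> y = y \<otimes>\<^bsub>G\<^esub> x" for x y
    proof -
      have "inv\<^bsub>G\<^esub> y \<otimes>\<^bsub>G\<^esub> (x \<otimes>\<^bsub>G\<^esub> y) = x"
        using self_inverse[rule_format, of "\<one>\<^bsub>G\<^esub>" x y] by (simp add: unfold carrier)
      then show ?thesis by (metis UNIV_I carrier inv_solve_left m_closed)
    qed
    then show "comm_group G" by (intro group_comm_groupI) (simp_all add: carrier)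
  qed
qed

lemma heap_pb_Pair [simp]: "heap_pb h ((a, b), (b, c)) = ((a, h a b c), (h a b c, c))"
  by (simp add: heap_pb_def)

lemma pb_heap_heap_pb: "pb_heap (heap_pb h) = h"
  by (intro ext) (simp add: pb_heap_def)

lemma heap_pb_pre_braiding:
  assumes "is_heap h" shows "pre_braiding (heap_pb h)"
  unfolding pre_braiding_def
  by (auto simp: heap_pb_def pg_Comp_def pg_unit_def pg_src_def pg_tgt_def lact_def ract_def
      assms heap_right_unit heap_left_unit heap_cancel_middle_left heap_cancel_middle_right)

lemma pre_braiding_Pair:
  assumes "pre_braiding \<sigma>"
  shows "\<sigma> ((a, b), (b, c)) = ((a, pb_heap \<sigma> a b c), (pb_heap \<sigma> a b c, c))"
proof -
  obtain p1 p2 q1 q2 where \<sigma>: "\<sigma> ((a, b), (b, c)) = ((p1, p2), (q1, q2))"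
    by (metis prod.collapse)
  have "\<sigma> ((a, b), (b, c)) \<in> pg_Comp"
    and "pg_src (lact \<sigma> (a, b) (b, c)) = a" and "pg_tgt (ract \<sigma> (a, b) (b, c)) = c"
    using assms unfolding pre_braiding_def by (auto simp: pg_src_def pg_tgt_def)
  then have "q1 = p2" "p1 = a" "q2 = c"
    by (auto simp: \<sigma> pg_Comp_iff pg_src_def pg_tgt_def lact_def ract_def)
  then show ?thesis by (simp add: \<sigma> pb_heap_def)
qed

lemma pb_heap_is_heap:
  assumes "pre_braiding \<sigma>" shows "is_heap (pb_heap \<sigma>)"
proof (rule is_heapI_middle_laws)
  let ?h = "pb_heap \<sigma>"
  note \<sigma> = pre_braiding_Pair[OF assms]
  fix a b c d
  have "\<sigma> ((a, b), pg_unit (pg_tgt (a, b))) = (pg_unit (pg_src (a, b)), (a, b))"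
    and "\<sigma> (pg_unit (pg_src (a, b)), (a, b)) = ((a, b), pg_unit (pg_tgt (a, b)))"
    using assms unfolding pre_braiding_def by blast+
  then show "?h a b b = a" and "?h a a b = b"
    by (simp_all add: pb_heap_def pg_unit_def pg_src_def pg_tgt_def)
  have "lact \<sigma> (a, b) (pg_comp (b, c) (c, d)) =
          pg_comp (lact \<sigma> (a, b) (b, c)) (lact \<sigma> (ract \<sigma> (a, b) (b, c)) (c, d))"
    and "ract \<sigma> (pg_comp (a, b) (b, c)) (c, d) =
          pg_comp (ract \<sigma> (a, b) (lact \<sigma> (b, c) (c, d))) (ract \<sigma> (b, c) (c, d))"
    using assms unfolding pre_braiding_def by auto
  then show "?h a b d = ?h (?h a b c) c d" and "?h a c d = ?h a b (?h b c d)"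
    by (simp_all add: lact_def ract_def \<sigma>)
qed

lemma heap_pb_pb_heap:
  assumes "pre_braiding \<sigma>" shows "heap_pb (pb_heap \<sigma>) = \<sigma>"
proof
  fix p :: "'a arr \<times> 'a arr"
  obtain a b c d where p: "p = ((a, b), (c, d))" by (metis prod.collapse)
  show "heap_pb (pb_heap \<sigma>) p = \<sigma> p"
  proof (cases "b = c")
    case True
    then show ?thesis by (simp add: p pre_braiding_Pair[OF assms])
  next
    case False
    then have "\<sigma> p = undefined"
      using assms by (simp add: pre_braiding_def p pg_Comp_iff)
    then show ?thesis using False by (simp add: p heap_pb_def)
  qed
qed

lemma bij_betw_heap_pb: "bij_betw heap_pb heaps prebraidings"
  by (rule bij_betw_byWitness[where f' = pb_heap])
    (auto simp: heaps_def prebraidings_def pb_heap_heap_pb heap_pb_pb_heap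
      heap_pb_pre_braiding pb_heap_is_heap)

lemma bij_betw_pointed_heap_pb:
  "bij_betw (\<lambda>(h, u). (heap_pb h, u)) pointed_heaps (prebraidings \<times> UNIV)"
  by (rule bij_betw_byWitness[where f' = "\<lambda>(\<sigma>, u). (pb_heap \<sigma>, u)"])
    (auto simp: pointed_heaps_def heaps_def prebraidings_def pb_heap_heap_pb heap_pb_pb_heap
      heap_pb_pre_braiding pb_heap_is_heap)

lemma involutive_braiding_heap_pb_iff:
  assumes "is_heap h"
  shows "involutive_braiding (heap_pb h) \<longleftrightarrow> (\<forall>a b c. h a (h a b c) c = b)"
proof
  assume "involutive_braiding (heap_pb h)"
  then have "heap_pb h (heap_pb h ((a, b), (b, c))) = ((a, b), (b, c))" for a b c
    unfolding involutive_braiding_def by (metis pg_Comp_iff)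
  then show "\<forall>a b c. h a (h a b c) c = b" by simp
next
  assume self_inverse: "\<forall>a b c. h a (h a b c) c = b"
  have involution: "\<forall>p\<in>pg_Comp. heap_pb h (heap_pb h p) = p"
    using self_inverse by (auto simp: pg_Comp_def heap_pb_def)
  have "heap_pb h ` pg_Comp \<subseteq> pg_Comp"
    by (auto simp: pg_Comp_def heap_pb_def)
  then have "bij_betw (heap_pb h) pg_Comp pg_Comp"
    using involution by (intro bij_betw_byWitness[where f' = "heap_pb h"]) auto
  then show "involutive_braiding (heap_pb h)"
    using involution heap_pb_pre_braiding[OF assms]
    by (simp add: involutive_braiding_def braiding_def)
qed

theorem corollary7p14:
  shows "(bij_betw (\<lambda>G. (group_heap G, \<one>\<^bsub>G\<^esub>)) groups_on_type pointed_heaps)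
    \<and> (\<forall>(h, u) \<in> pointed_heaps. heap_group h u \<in> groups_on_type \<and>
           group_heap (heap_group h u) = h \<and> \<one>\<^bsub>heap_group h u\<^esub> = u)
    \<and> (\<forall>G \<in> groups_on_type. heap_group (group_heap G) \<one>\<^bsub>G\<^esub> = G)
    \<and> (bij_betw heap_pb heaps prebraidings)
    \<and> (\<forall>h \<in> heaps. pb_heap (heap_pb h) = h)
    \<and> (\<forall>\<sigma> \<in> prebraidings. pb_heap \<sigma> \<in> heaps \<and> heap_pb (pb_heap \<sigma>) = \<sigma>)
    \<and> (bij_betw (\<lambda>(h, u). (heap_pb h, u)) pointed_heaps (prebraidings \<times> UNIV))
    \<and> (bij_betw (\<lambda>G. (heap_pb (group_heap G), \<one>\<^bsub>G\<^esub>)) groups_on_type (prebraidings \<times> UNIV))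
    \<and> (\<forall>G \<in> groups_on_type. comm_group G \<longleftrightarrow> involutive_braiding (heap_pb (group_heap G)))
    \<and> (\<forall>G \<in> groups_on_type. comm_group G \<longleftrightarrow>
           (\<forall>a b c. group_heap G a (group_heap G a b c) c = b))"
proof -
  have groups_to_prebraidings:
    "bij_betw (\<lambda>G. (heap_pb (group_heap G), \<one>\<^bsub>G\<^esub>)) groups_on_type (prebraidings \<times> UNIV)"
    using bij_betw_trans[OF bij_betw_group_pointed_heap bij_betw_pointed_heap_pb]
    by (simp add: comp_def)
  have comm_iff_involutive:
    "comm_group G \<longleftrightarrow> involutive_braiding (heap_pb (group_heap G))" if "G \<in> groups_on_type" for G
    using that by (simp add: comm_group_iff_group_heap_self_inverse
        involutive_braiding_heap_pb_iff group_heap_is_heap)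
  show ?thesis
    using bij_betw_group_pointed_heap bij_betw_heap_pb bij_betw_pointed_heap_pb
      groups_to_prebraidings comm_iff_involutive comm_group_iff_group_heap_self_inverse
    by (auto simp: pointed_heaps_def heaps_def prebraidings_def heap_group_in_groups_on_type
        group_heap_heap_group heap_group_group_heap pb_heap_heap_pb heap_pb_pb_heap pb_heap_is_heap)
qed

end
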